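(* Let $\mathbb{K}$ be algebraically closed of characteristic zero, $T$ a torus and $V=\bigoplus_{i=1}^nV_i$ a $T$-module with $V_i\cong\mathbb K$ of weight $s_i\in X^*(T)$. Then $(T,V)$ is visible if and only if there is a partition $\{1,\dots,n\}=\bigsqcup_{j=0}^l I_j$ (with $l\ge0$, $I_0$ possibly empty) such that: (i) $\langle s_i\mid 1\le i\le n\rangle=\bigoplus_{j=0}^l\langle s_i\mid i\in I_j\rangle$; (ii) $\dim\langle s_i\mid i\in I_0\rangle=\#I_0$ and $\dim\langle s_i\mid i\in I_j\rangle=\#I_j-1$ for $j\ge1$; (iii) $0\in CH^{\circ}(\{s_i\mid i\in I_j\})$ for every $j\ge1$.
   Context: $(T,V)$ is visible if $V$ contains finitely many nilpotent $T$-orbits ($x$ nilpotent means $0\in\overline{T\cdot x}$). Spans $\langle\cdot\rangle$ are taken in $X^*(T)\otimes_{\mathbb Z}\mathbb Q$. $CH^{\circ}(A)$ is the set of convex combinations $\sum_{a\in A}\alpha_aa$ with all $\alpha_a>0$. *)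

theory Defs
  imports "HOL-Analysis.Analysis" "HOL-Computational_Algebra.Polynomial"
begin

text \<open>Torus T = (K^*)^r of rank r = CARD('r); characters X^*(T) = Z^r, the character
  s acting by t^s = prod_k (t_k)^(s_k).\<close>

definition torus :: "('a::field ^ 'r) set" where
  "torus = {t. \<forall>k. t $ k \<noteq> 0}"

definition char_eval :: "int ^ 'r \<Rightarrow> 'a::field ^ 'r \<Rightarrow> 'a" where
  "char_eval s t = (\<Prod>k\<in>UNIV. (t $ k) powi (s $ k))"

definition tact :: "('n \<Rightarrow> int ^ 'r) \<Rightarrow> 'a::field ^ 'r \<Rightarrow> 'a ^ 'n \<Rightarrow> 'a ^ 'n" where
  "tact s t x = (\<chi> i. char_eval (s i) t * x $ i)"

definition orbit :: "('n \<Rightarrow> int ^ 'r) \<Rightarrow> 'a::field ^ 'n \<Rightarrow> ('a ^ 'n) set" where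
  "orbit s x = (\<lambda>t. tact s t x) ` (torus :: ('a ^ 'r) set)"

inductive_set polyfun :: "('a::field ^ 'n \<Rightarrow> 'a) set" where
  pf_const: "(\<lambda>v. c) \<in> polyfun"
| pf_coord: "(\<lambda>v. v $ i) \<in> polyfun"
| pf_add: "p \<in> polyfun \<Longrightarrow> q \<in> polyfun \<Longrightarrow> (\<lambda>v. p v + q v) \<in> polyfun"
| pf_mult: "p \<in> polyfun \<Longrightarrow> q \<in> polyfun \<Longrightarrow> (\<lambda>v. p v * q v) \<in> polyfun"

definition zariski_closure :: "('a::field ^ 'n) set \<Rightarrow> ('a ^ 'n) set" where
  "zariski_closure S = {y. \<forall>p\<in>polyfun. (\<forall>x\<in>S. p x = 0) \<longrightarrow> p y = 0}"

definition nilpotent_vec :: "('n \<Rightarrow> int ^ 'r) \<Rightarrow> 'a::field ^ 'n \<Rightarrow> bool" where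
  "nilpotent_vec s x \<longleftrightarrow> 0 \<in> zariski_closure (orbit s x :: ('a ^ 'n) set)"

definition visible :: "'a::field itself \<Rightarrow> ('n::finite \<Rightarrow> int ^ 'r) \<Rightarrow> bool" where
  "visible (_::'a itself) s \<longleftrightarrow>
     finite {orbit s x | x :: 'a ^ 'n. nilpotent_vec s x}"

text \<open>X^*(T) \<otimes> Q = Q^r.\<close>

definition wt :: "int ^ 'r \<Rightarrow> rat ^ 'r" where
  "wt s = (\<chi> k. of_int (s $ k))"

definition is_direct_sum :: "(rat ^ 'r) set \<Rightarrow> nat set \<Rightarrow> (nat \<Rightarrow> (rat ^ 'r) set) \<Rightarrow> bool" where
  "is_direct_sum U J W \<longleftrightarrow>
     (\<forall>j\<in>J. vec.subspace (W j)) \<and> U = vec.span (\<Union>j\<in>J. W j) \<and>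
     (\<forall>w. (\<forall>j\<in>J. w j \<in> W j) \<longrightarrow> (\<Sum>j\<in>J. w j) = 0 \<longrightarrow> (\<forall>j\<in>J. w j = 0))"

definition open_convex_hull :: "(rat ^ 'r) set \<Rightarrow> (rat ^ 'r) set" where
  "open_convex_hull A = {(\<Sum>a\<in>A. c a *s a) | c. (\<forall>a\<in>A. c a > 0) \<and> (\<Sum>a\<in>A. c a) = 1}"

end

theory Submission
  imports Defs
begin

text \<open>Write v i for the weight s i in \<rat>^r and call S \<subseteq> {1..n} positively independent if no
  nonzero nonnegative relation among the v i is supported in S. Both sides of the equivalence say
  that every positively independent S is linearly independent.

  Visibility: by Gordan's alternative a positively independent S admits an integral cocharacter
  pairing positively with all v i, i \<in> S, so every vector with support S is nilpotent; conversely
  a nonnegative relation on the support of x yields a nonconstant invariant monomial, so x is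
  not nilpotent. If all positively independent supports are free, the torus acts transitively
  on vectors with a given such support, so there are at most 2^n nilpotent orbits. If some
  positively independent S carries a linear relation m, the invariant monomial of m takes every
  nonzero value on nilpotent vectors supported in S, giving infinitely many nilpotent orbits.

  Partition: when positive independence implies freeness, the minimal supports of nonnegative
  relations (positive circuits) are pairwise disjoint, since two overlapping ones combine to a
  relation whose sign-conformal nonnegative part lies in a proper subset of one of them. Each
  circuit spans a space of dimension one less than its size, the indices outside all circuits
  are free, and dropping one index from every circuit leaves a free set, which makes the sum of
  the spans direct. Conversely such a partition forces freeness block by block.\<close>

definition lincomb :: "('n::finite \<Rightarrow> 'a::field ^ 'r) \<Rightarrow> ('n \<Rightarrow> 'a) \<Rightarrow> 'a ^ 'r" where
  "lincomb v c = (\<Sum>i\<in>UNIV. c i *s v i)"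

lemma lincomb_eq_sum:
  assumes "\<And>i. i \<notin> S \<Longrightarrow> c i = 0"
  shows "lincomb v c = (\<Sum>i\<in>S. c i *s v i)"
  unfolding lincomb_def using assms by (intro sum.mono_neutral_right) auto

lemma lincomb_diff: "lincomb v (\<lambda>i. c i - d i) = lincomb v c - lincomb v d"
  unfolding lincomb_def by (simp add: vector_sub_rdistrib sum_subtractf)

lemma lincomb_scale: "lincomb v (\<lambda>i. r * c i) = r *s lincomb v c"
  unfolding lincomb_def by (simp add: vec.scale_sum_right vector_smult_assoc)

lemma lincomb_sum: "lincomb v (\<lambda>i. \<Sum>j\<in>J. c j i) = (\<Sum>j\<in>J. lincomb v (c j))"
  unfolding lincomb_def by (simp add: vec.scale_sum_left) (rule sum.swap)

lemma lincomb_in_span: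
  assumes "\<And>i. i \<notin> S \<Longrightarrow> c i = 0"
  shows "lincomb v c \<in> vec.span (v ` S)"
proof -
  have "(\<Sum>i\<in>S. c i *s v i) \<in> vec.span (v ` S)"
    by (intro vec.span_sum vec.span_scale vec.span_base) auto
  then show ?thesis using lincomb_eq_sum[of S c v] assms by simp
qed

lemma in_span_imp_lincomb:
  assumes "x \<in> vec.span (v ` S)"
  shows "\<exists>c. (\<forall>i. i \<notin> S \<longrightarrow> c i = 0) \<and> x = lincomb v c"
  using assms
proof (induction rule: vec.span_induct_alt)
  case base
  show ?case by (intro exI[of _ "\<lambda>i. 0"]) (simp add: lincomb_def)
next
  case (step r y z)
  then obtain c where c: "\<forall>i. i \<notin> S \<longrightarrow> c i = 0" "z = lincomb v c" by blast
  from step(1) obtain j where j: "j \<in> S" "y = v j" by blast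
  define d where "d = c(j := c j + r)"
  have "lincomb v d = r *s y + z"
    unfolding d_def lincomb_def c(2) j(2)
    by (simp add: sum.remove[of UNIV j] vector_sadd_rdistrib algebra_simps)
  moreover have "\<forall>i. i \<notin> S \<longrightarrow> d i = 0" using c(1) j(1) by (simp add: d_def)
  ultimately show ?case by metis
qed

lemma span_remove_redundant:
  assumes rel: "lincomb v a = 0" and supp: "{i. a i \<noteq> 0} \<subseteq> A" and i0: "a i0 \<noteq> 0"
  shows "vec.span (v ` A) = vec.span (v ` (A - {i0}))"
proof -
  have "lincomb v a = a i0 *s v i0 + (\<Sum>i\<in>A - {i0}. a i *s v i)"
    using supp i0 by (subst lincomb_eq_sum[of A]) (auto simp: sum.remove)
  then have eq: "a i0 *s v i0 = - (\<Sum>i\<in>A - {i0}. a i *s v i)"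
    using rel by (simp add: eq_neg_iff_add_eq_0)
  have "v i0 = (1 / a i0) *s (a i0 *s v i0)" using i0 by (simp add: vector_smult_assoc)
  also have "\<dots> = (1 / a i0) *s - (\<Sum>i\<in>A - {i0}. a i *s v i)" by (simp only: eq)
  also have "\<dots> \<in> vec.span (v ` (A - {i0}))"
    by (intro vec.span_scale vec.span_neg vec.span_sum vec.span_base) auto
  finally have "v i0 \<in> vec.span (v ` (A - {i0}))" .
  moreover have "v ` A = insert (v i0) (v ` (A - {i0}))" using supp i0 by blast
  ultimately show ?thesis using vec.span_redundant by simp
qed

definition lin_indep_on :: "('n::finite \<Rightarrow> 'a::field ^ 'r) \<Rightarrow> 'n set \<Rightarrow> bool" where
  "lin_indep_on v S \<longleftrightarrow> (\<forall>c. lincomb v c = 0 \<longrightarrow> {i. c i \<noteq> 0} \<subseteq> S \<longrightarrow> (\<forall>i. c i = 0))"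

lemma lin_indep_onD: "lin_indep_on v S \<Longrightarrow> lincomb v c = 0 \<Longrightarrow> {i. c i \<noteq> 0} \<subseteq> S \<Longrightarrow> c i = 0"
  unfolding lin_indep_on_def by blast

lemma lin_indep_on_iff_inj_independent:
  fixes v :: "'n::finite \<Rightarrow> 'a::field ^ 'r"
  shows   "lin_indep_on v A \<longleftrightarrow> inj_on v A \<and> vec.independent (v ` A)"
proof
  assume F: "lin_indep_on v A"
  have inj: "inj_on v A"
  proof (rule inj_onI, rule ccontr)
    fix i k assume ik: "i \<in> A" "k \<in> A" "v i = v k" "i \<noteq> k"
    define c where "c = (\<lambda>x. if x = i then 1 else if x = k then -1 else 0 :: 'a)"
    have "lincomb v c = v i - v k"
      using ik by (subst lincomb_eq_sum[of "{i, k}"]) (auto simp: c_def)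
    then have "c i = 0" using ik by (intro lin_indep_onD[OF F]) (auto simp: c_def)
    then show False by (simp add: c_def)
  qed
  moreover have "vec.independent (v ` A)"
  proof
    assume "vec.dependent (v ` A)"
    then obtain u where u: "\<exists>w\<in>v ` A. u w \<noteq> 0" "(\<Sum>w\<in>v ` A. u w *s w) = 0"
      using vec.dependent_finite[of "v ` A"] by auto
    define c where "c = (\<lambda>x. if x \<in> A then u (v x) else 0)"
    have "lincomb v c = (\<Sum>w\<in>v ` A. u w *s w)"
      by (subst lincomb_eq_sum[of A]) (auto simp: c_def sum.reindex[OF inj])
    then have "\<forall>x. c x = 0" using u by (intro allI lin_indep_onD[OF F]) (auto simp: c_def)
    then show False using u unfolding c_def by (metis (mono_tags) image_iff)
  qed
  ultimately show "inj_on v A \<and> vec.independent (v ` A)" ..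
next
  assume "inj_on v A \<and> vec.independent (v ` A)"
  then have inj: "inj_on v A" and indep: "vec.independent (v ` A)" by auto
  show "lin_indep_on v A" unfolding lin_indep_on_def
  proof (intro allI impI)
    fix c i assume c: "lincomb v c = 0" "{i. c i \<noteq> 0} \<subseteq> A"
    have "(\<Sum>w\<in>v ` A. c (inv_into A v w) *s w) = lincomb v c"
      using c by (subst lincomb_eq_sum[of A]) (auto simp: sum.reindex[OF inj] inj)
    then have "\<forall>w\<in>v ` A. c (inv_into A v w) = 0"
      using c indep vec.dependent_finite[of "v ` A"] by auto
    then show "c i = 0" using c inj by (cases "i \<in> A") auto
  qed
qed

lemma lin_indep_on_iff_dim:
  fixes v :: "'n::finite \<Rightarrow> 'a::field ^ 'r"
  shows "lin_indep_on v A \<longleftrightarrow> vec.dim (vec.span (v ` A)) = card A"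
proof
  assume "lin_indep_on v A"
  then have inj: "inj_on v A" and indep: "vec.independent (v ` A)"
    by (auto simp: lin_indep_on_iff_inj_independent)
  show "vec.dim (vec.span (v ` A)) = card A"
    using vec.dim_span_eq_card_independent[OF indep] card_image[OF inj] by simp
next
  assume D: "vec.dim (vec.span (v ` A)) = card A"
  have "vec.dim (vec.span (v ` A)) \<le> card (v ` A)" by (rule vec.dim_le_card) auto
  with D card_image_le[of A v] have card_eq: "card (v ` A) = card A" by simp
  then have "inj_on v A" by (intro eq_card_imp_inj_on) auto
  moreover have "vec.independent (v ` A)"
    using D card_eq by (simp add: vec.card_eq_dim[OF vec.span_superset])
  ultimately show "lin_indep_on v A" by (simp add: lin_indep_on_iff_inj_independent)
qed

lemma lin_indep_on_disjoint_spans: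
  assumes indep: "lin_indep_on v X" and fin: "finite K"
    and sub: "\<And>j. j \<in> K \<Longrightarrow> J j \<subseteq> X"
    and disj: "\<And>j k. j \<in> K \<Longrightarrow> k \<in> K \<Longrightarrow> j \<noteq> k \<Longrightarrow> J j \<inter> J k = {}"
    and w: "\<And>j. j \<in> K \<Longrightarrow> w j \<in> vec.span (v ` J j)" and w0: "(\<Sum>j\<in>K. w j) = 0"
    and j: "j \<in> K"
  shows "w j = 0"
proof -
  have "\<forall>j\<in>K. \<exists>d. (\<forall>i. i \<notin> J j \<longrightarrow> d i = 0) \<and> w j = lincomb v d"
    using w in_span_imp_lincomb by blast
  then obtain c where c: "\<And>j i. j \<in> K \<Longrightarrow> i \<notin> J j \<Longrightarrow> c j i = 0"
    and wc: "\<And>j. j \<in> K \<Longrightarrow> w j = lincomb v (c j)"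
    by metis
  have c_other: "c k i = 0" if "k \<in> K" "k \<noteq> j" "i \<in> J j" for k i
    using c disj j that by blast
  have "lincomb v (\<lambda>i. \<Sum>k\<in>K. c k i) = 0"
    using w0 wc by (simp add: lincomb_sum)
  moreover have "{i. (\<Sum>k\<in>K. c k i) \<noteq> 0} \<subseteq> X"
    using c sub by (fastforce elim: sum.not_neutral_contains_not_neutral)
  ultimately have "(\<Sum>k\<in>K. c k i) = 0" for i by (rule lin_indep_onD[OF indep])
  moreover have "(\<Sum>k\<in>K. c k i) = c j i" if "i \<in> J j" for i
    using j fin c_other that by (auto simp: sum.remove intro!: sum.neutral)
  ultimately have "c j = (\<lambda>i. 0)" using c[OF j] by fastforce
  then show ?thesis using wc[OF j] by (simp add: lincomb_def)
qed

section \<open>Gordan's alternative\<close>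

definition vdot :: "'a::comm_ring ^ 'r \<Rightarrow> 'a ^ 'r \<Rightarrow> 'a" where
  "vdot x y = (\<Sum>k\<in>UNIV. x $ k * y $ k)"

lemma vdot_commute: "vdot x y = vdot y x"
  unfolding vdot_def by (simp add: mult.commute)

lemma vdot_add_right: "vdot x (y + z) = vdot x y + vdot x z"
  unfolding vdot_def by (simp add: algebra_simps sum.distrib)

lemma vdot_diff_right: "vdot x (y - z) = vdot x y - vdot x z"
  unfolding vdot_def by (simp add: algebra_simps sum_subtractf)

lemma vdot_scale_right: "vdot x (c *s y) = c * vdot x y"
  unfolding vdot_def by (simp add: algebra_simps sum_distrib_left)

lemma vdot_sum_right: "vdot x (\<Sum>i\<in>A. f i) = (\<Sum>i\<in>A. vdot x (f i))"
  unfolding vdot_def sum_component sum_distrib_left by (rule sum.swap)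

lemma vdot_add_left: "vdot (y + z) x = vdot y x + vdot z x"
  by (metis vdot_add_right vdot_commute)

lemma vdot_diff_left: "vdot (y - z) x = vdot y x - vdot z x"
  by (metis vdot_diff_right vdot_commute)

lemma vdot_scale_left: "vdot (c *s y) x = c * vdot y x"
  by (metis vdot_scale_right vdot_commute)

lemma vdot_self_pos:
  fixes u :: "'a::linordered_idom ^ 'r"
  assumes "u \<noteq> 0"
  shows "0 < vdot u u"
proof -
  obtain k where "u $ k \<noteq> 0" using assms by (metis vec_eq_iff zero_index)
  then show ?thesis unfolding vdot_def by (intro sum_pos2[where i = k]) (auto simp: zero_less_mult_iff)
qed

definition proj_orth :: "'a::field ^ 'r \<Rightarrow> 'a ^ 'r \<Rightarrow> 'a ^ 'r" where
  "proj_orth u x = x - (vdot x u / vdot u u) *s u"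

lemma vdot_proj_orth_commute: "vdot (proj_orth u x) y = vdot x (proj_orth u y)"
  unfolding proj_orth_def vdot_diff_left vdot_diff_right vdot_scale_left vdot_scale_right
  by (simp add: vdot_commute)

lemma vdot_proj_orth_self:
  fixes u :: "'a::linordered_field ^ 'r"
  assumes "u \<noteq> 0"
  shows "vdot (proj_orth u x) u = 0"
  using vdot_self_pos[OF assms]
  unfolding proj_orth_def vdot_diff_left vdot_scale_left by simp

lemma sum_scale_proj_orth:
  "(\<Sum>i\<in>S. a i *s proj_orth u (v i)) =
     (\<Sum>i\<in>S. a i *s v i) - ((\<Sum>i\<in>S. a i * vdot (v i) u) / vdot u u) *s u"
  unfolding proj_orth_def
  by (simp add: vector_ssub_ldistrib sum_subtractf vec.scale_sum_left sum_divide_distrib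
      vector_smult_assoc)

lemma exists_small_pos_perturbation:
  fixes \<alpha> \<beta> :: "'i \<Rightarrow> 'a::linordered_field"
  assumes "finite S" "\<forall>i\<in>S. 0 < \<alpha> i"
  shows "\<exists>t>0. \<forall>i\<in>S. 0 < \<alpha> i + t * \<beta> i"
  using assms
proof (induction S rule: finite_induct)
  case empty
  then show ?case by (intro exI[of _ 1]) auto
next
  case (insert j S)
  then obtain t0 where t0: "t0 > 0" "\<forall>i\<in>S. 0 < \<alpha> i + t0 * \<beta> i" by auto
  define t where "t = min t0 (\<alpha> j / (\<bar>\<beta> j\<bar> + 1))"
  have aj: "\<alpha> j > 0" using insert by auto
  have t: "t > 0" "t \<le> t0" unfolding t_def using t0 aj by (auto simp: add_pos_nonneg)
  have "0 < \<alpha> i + t * \<beta> i" if "i \<in> S" for i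
  proof (cases "\<beta> i \<ge> 0")
    case True
    then show ?thesis using insert that t by (simp add: add_pos_nonneg)
  next
    case False
    then have "t0 * \<beta> i \<le> t * \<beta> i" using t by (simp add: mult_right_mono_neg)
    then show ?thesis using t0 that by fastforce
  qed
  moreover have "0 < \<alpha> j + t * \<beta> j"
  proof -
    have "t * (\<bar>\<beta> j\<bar> + 1) \<le> \<alpha> j"
      using t by (simp add: t_def pos_le_divide_eq[symmetric] add_pos_nonneg)
    moreover have "t * (- \<bar>\<beta> j\<bar>) \<le> t * \<beta> j" using t by (intro mult_left_mono) auto
    ultimately show ?thesis using t by (simp add: algebra_simps)
  qed
  ultimately show ?case using t by auto
qed

lemma pos_functional_insert:
  fixes v :: "'i \<Rightarrow> 'a::linordered_field ^ 'r"
  assumes "finite S" "u \<noteq> 0" "\<forall>i\<in>S. 0 < vdot m (proj_orth u (v i))"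
  shows "\<exists>l. 0 < vdot l u \<and> (\<forall>i\<in>S. 0 < vdot l (v i))"
proof -
  define n where "n = proj_orth u m"
  have n: "\<forall>i\<in>S. 0 < vdot n (v i)"
    using assms(3) by (simp add: n_def vdot_proj_orth_commute)
  obtain t where t: "t > 0" "\<forall>i\<in>S. 0 < vdot n (v i) + t * vdot u (v i)"
    using exists_small_pos_perturbation[OF assms(1) n, of "\<lambda>i. vdot u (v i)"] by blast
  have "0 < vdot (n + t *s u) u"
    using t vdot_self_pos[OF assms(2)] vdot_proj_orth_self[OF assms(2)]
    by (simp add: n_def vdot_add_left vdot_scale_left)
  moreover have "\<forall>i\<in>S. 0 < vdot (n + t *s u) (v i)"
    using t by (simp add: vdot_add_left vdot_scale_left)
  ultimately show ?thesis by blast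
qed

lemma nonneg_relation_insert:
  fixes v :: "'i \<Rightarrow> 'a::linordered_field ^ 'r"
  assumes S: "finite S" "w \<notin> S" and a: "\<forall>i\<in>S. 0 \<le> a i" "(\<Sum>i\<in>S. a i *s v i) = c *s v w"
    and c: "c \<le> 0" and nz: "c < 0 \<or> (\<exists>i\<in>S. a i \<noteq> 0)"
  shows "\<exists>b. (\<forall>i\<in>insert w S. 0 \<le> b i) \<and> (\<exists>i\<in>insert w S. b i \<noteq> 0) \<and>
    (\<Sum>i\<in>insert w S. b i *s v i) = 0"
proof (intro exI conjI)
  have "(\<Sum>i\<in>S. (a(w := - c)) i *s v i) = (\<Sum>i\<in>S. a i *s v i)"
    using S(2) by (intro sum.cong) auto
  then have "(\<Sum>i\<in>insert w S. (a(w := - c)) i *s v i) = (- c) *s v w + c *s v w"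
    using S a(2) by simp
  also have "\<dots> = 0" by (simp flip: vector_sadd_rdistrib)
  finally show "(\<Sum>i\<in>insert w S. (a(w := - c)) i *s v i) = 0" .
  show "\<forall>i\<in>insert w S. 0 \<le> (a(w := - c)) i" using a(1) c by auto
  show "\<exists>i\<in>insert w S. (a(w := - c)) i \<noteq> 0" using nz S(2) by auto
qed

text \<open>Projecting along u only subtracts multiples of u, so the relation becomes c u.\<close>

lemma nonneg_relation_of_projections:
  fixes v :: "'i \<Rightarrow> 'a::linordered_field ^ 'r"
  assumes "finite S" and l: "\<forall>i\<in>S. 0 < vdot l (v i)" "\<not> 0 < vdot l u"
    and a: "\<forall>i\<in>S. 0 \<le> a i" "\<exists>i\<in>S. a i \<noteq> 0" "(\<Sum>i\<in>S. a i *s proj_orth u (v i)) = 0"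
  shows "\<exists>c \<le> 0. (\<Sum>i\<in>S. a i *s v i) = c *s u"
proof -
  define c where "c = (\<Sum>i\<in>S. a i * vdot (v i) u) / vdot u u"
  have sum_a: "(\<Sum>i\<in>S. a i *s v i) = c *s u"
    using a(3) unfolding sum_scale_proj_orth c_def by simp
  have "c \<le> 0"
  proof (rule ccontr)
    assume "\<not> c \<le> 0"
    then have "vdot l (c *s u) \<le> 0" using l(2) by (simp add: vdot_scale_right mult_le_0_iff)
    moreover obtain j where "j \<in> S" "a j \<noteq> 0" using a(2) by blast
    then have "0 < (\<Sum>i\<in>S. a i * vdot l (v i))"
      using a(1) l(1) assms(1) by (intro sum_pos2[where i = j]) (auto simp: order_le_neq_trans)
    moreover have "vdot l (c *s u) = (\<Sum>i\<in>S. a i * vdot l (v i))"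
      unfolding sum_a[symmetric] by (simp add: vdot_sum_right vdot_scale_right)
    ultimately show False by simp
  qed
  then show ?thesis using sum_a by blast
qed

theorem gordan_alternative:
  fixes v :: "'i \<Rightarrow> 'a::linordered_field ^ 'r"
  assumes "finite S"
  shows "(\<exists>l. \<forall>i\<in>S. 0 < vdot l (v i)) \<or>
         (\<exists>a. (\<forall>i\<in>S. 0 \<le> a i) \<and> (\<exists>i\<in>S. a i \<noteq> 0) \<and> (\<Sum>i\<in>S. a i *s v i) = 0)"
  (is "?functional S v \<or> ?relation S v")
  using assms
proof (induction S arbitrary: v rule: finite_induct)
  case empty
  then show ?case by auto
next
  case (insert w S)
  note extend = nonneg_relation_insert[OF insert(1,2)]
  show ?case
  proof (cases "v w = 0")
    case True
    then show ?thesis using extend[of "\<lambda>i. 0" v "-1"] by simp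
  next
    case u: False
    from insert(3)[of v] show ?thesis
    proof
      assume "?relation S v"
      then show ?thesis using extend[of _ v 0] by auto
    next
      assume "?functional S v"
      then obtain l where l: "\<forall>i\<in>S. 0 < vdot l (v i)" by blast
      show ?thesis
      proof (cases "0 < vdot l (v w)")
        case True
        then show ?thesis using l by auto
      next
        case lu: False
        from insert(3)[of "\<lambda>i. proj_orth (v w) (v i)"] show ?thesis
        proof
          assume "?functional S (\<lambda>i. proj_orth (v w) (v i))"
          then show ?thesis using pos_functional_insert[OF insert(1) u] by auto
        next
          assume "?relation S (\<lambda>i. proj_orth (v w) (v i))"
          then obtain a where a: "\<forall>i\<in>S. 0 \<le> a i" "\<exists>i\<in>S. a i \<noteq> 0"
            and "(\<Sum>i\<in>S. a i *s proj_orth (v w) (v i)) = 0" by blast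
          then obtain c where "c \<le> 0" "(\<Sum>i\<in>S. a i *s v i) = c *s v w"
            using nonneg_relation_of_projections[OF insert(1) l lu] by blast
          then show ?thesis using extend[OF a(1)] a(2) by blast
        qed
      qed
    qed
  qed
qed

section \<open>Nonnegative relations and positive circuits\<close>

definition nonneg_relation :: "('n::finite \<Rightarrow> 'a::linordered_field ^ 'r) \<Rightarrow> ('n \<Rightarrow> 'a) \<Rightarrow> bool" where
  "nonneg_relation v c \<longleftrightarrow> (\<forall>i. 0 \<le> c i) \<and> (\<exists>i. c i \<noteq> 0) \<and> lincomb v c = 0"

definition pos_indep_on :: "('n::finite \<Rightarrow> 'a::linordered_field ^ 'r) \<Rightarrow> 'n set \<Rightarrow> bool" where
  "pos_indep_on v S \<longleftrightarrow> \<not> (\<exists>c. nonneg_relation v c \<and> {i. c i \<noteq> 0} \<subseteq> S)"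

lemma pos_indep_on_imp_pos_functional:
  fixes v :: "'n::finite \<Rightarrow> 'a::linordered_field ^ 'r"
  assumes "pos_indep_on v S"
  shows "\<exists>l. \<forall>i\<in>S. 0 < vdot l (v i)"
proof -
  have "\<not> (\<exists>a. (\<forall>i\<in>S. 0 \<le> a i) \<and> (\<exists>i\<in>S. a i \<noteq> 0) \<and> (\<Sum>i\<in>S. a i *s v i) = 0)"
  proof
    assume "\<exists>a. (\<forall>i\<in>S. 0 \<le> a i) \<and> (\<exists>i\<in>S. a i \<noteq> 0) \<and> (\<Sum>i\<in>S. a i *s v i) = 0"
    then obtain a where a: "\<forall>i\<in>S. 0 \<le> a i" "\<exists>i\<in>S. a i \<noteq> 0" "(\<Sum>i\<in>S. a i *s v i) = 0"
      by blast
    define c where "c i = (if i \<in> S then a i else 0)" for i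
    have "lincomb v c = (\<Sum>i\<in>S. a i *s v i)" by (subst lincomb_eq_sum[of S]) (auto simp: c_def)
    then have "nonneg_relation v c" using a by (auto simp: nonneg_relation_def c_def)
    moreover have "{i. c i \<noteq> 0} \<subseteq> S" by (auto simp: c_def)
    ultimately show False using assms by (auto simp: pos_indep_on_def)
  qed
  then show ?thesis using gordan_alternative[of S v] by auto
qed

definition pos_circuit :: "('n::finite \<Rightarrow> 'a::linordered_field ^ 'r) \<Rightarrow> 'n set \<Rightarrow> bool" where
  "pos_circuit v C \<longleftrightarrow>
     (\<exists>a. nonneg_relation v a \<and> {i. a i \<noteq> 0} = C) \<and>
     (\<forall>b. nonneg_relation v b \<longrightarrow> \<not> {i. b i \<noteq> 0} \<subset> C)"

lemma pos_circuit_nonempty: "pos_circuit v C \<Longrightarrow> C \<noteq> {}"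
  unfolding pos_circuit_def nonneg_relation_def by auto

lemma exists_pos_circuit_subset:
  fixes v :: "'n::finite \<Rightarrow> 'a::linordered_field ^ 'r"
  assumes "nonneg_relation v a"
  shows "\<exists>C. pos_circuit v C \<and> C \<subseteq> {i. a i \<noteq> 0}"
proof -
  let ?R = "\<lambda>b. nonneg_relation v b \<and> {i. b i \<noteq> 0} \<subseteq> {i. a i \<noteq> 0}"
  obtain b where b: "?R b" and least: "\<And>b'. ?R b' \<Longrightarrow> card {i. b i \<noteq> 0} \<le> card {i. b' i \<noteq> 0}"
    using ex_has_least_nat[of ?R a "\<lambda>b. card {i. b i \<noteq> 0}"] assms by blast
  have "pos_circuit v {i. b i \<noteq> 0}"
    unfolding pos_circuit_def
  proof (intro conjI allI impI notI exI[of _ b])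
    fix b' assume b': "nonneg_relation v b'" "{i. b' i \<noteq> 0} \<subset> {i. b i \<noteq> 0}"
    then have "card {i. b' i \<noteq> 0} < card {i. b i \<noteq> 0}" by (intro psubset_card_mono) auto
    moreover have "?R b'" using b b' by blast
    ultimately show False using least[of b'] by simp
  qed (use b in auto)
  then show ?thesis using b by blast
qed

lemma pos_circuit_span_remove:
  assumes "pos_circuit v C" "i \<in> C"
  shows "vec.span (v ` C) = vec.span (v ` (C - {i}))"
proof -
  obtain a where "nonneg_relation v a" "{i. a i \<noteq> 0} = C"
    using assms(1) by (auto simp: pos_circuit_def)
  then show ?thesis using assms(2) by (intro span_remove_redundant) (auto simp: nonneg_relation_def)
qed

lemma nonneg_relation_imp_open_convex_hull:
  fixes v :: "'n::finite \<Rightarrow> rat ^ 'r"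
  assumes a: "nonneg_relation v a"
  shows "0 \<in> open_convex_hull (v ` {i. a i \<noteq> 0})"
proof -
  define C where "C = {i. a i \<noteq> 0}"
  have apos: "a i > 0" if "i \<in> C" for i
    using that a by (auto simp: C_def nonneg_relation_def order_le_neq_trans)
  define A where "A = (\<Sum>i\<in>C. a i)"
  define fibre where "fibre w = {i\<in>C. v i = w}" for w
  define g where "g w = (\<Sum>i\<in>fibre w. a i) / A" for w
  have "C \<noteq> {}" using a by (auto simp: C_def nonneg_relation_def)
  then have "A > 0" unfolding A_def using apos by (intro sum_pos) auto
  have gpos: "g w > 0" if "w \<in> v ` C" for w
    using that \<open>A > 0\<close> apos unfolding g_def fibre_def by (auto intro!: divide_pos_pos sum_pos)
  have "(\<Sum>w\<in>v ` C. g w) = (\<Sum>w\<in>v ` C. \<Sum>i\<in>fibre w. a i) / A"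
    unfolding g_def by (simp add: sum_divide_distrib)
  also have "(\<Sum>w\<in>v ` C. \<Sum>i\<in>fibre w. a i) = A"
    unfolding A_def fibre_def by (rule sum.image_gen[symmetric]) simp
  finally have g1: "(\<Sum>w\<in>v ` C. g w) = 1" using \<open>A > 0\<close> by simp
  have "(\<Sum>w\<in>v ` C. g w *s w) = (\<Sum>w\<in>v ` C. (1 / A) *s (\<Sum>i\<in>fibre w. a i *s v i))"
  proof (rule sum.cong[OF refl])
    fix w assume "w \<in> v ` C"
    have "(\<Sum>i\<in>fibre w. a i *s v i) = (\<Sum>i\<in>fibre w. a i) *s w"
      by (simp add: fibre_def vec.scale_sum_left)
    then show "g w *s w = (1 / A) *s (\<Sum>i\<in>fibre w. a i *s v i)"
      by (simp add: g_def vector_smult_assoc)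
  qed
  also have "\<dots> = (1 / A) *s (\<Sum>w\<in>v ` C. \<Sum>i\<in>fibre w. a i *s v i)"
    by (simp add: vec.scale_sum_right)
  also have "(\<Sum>w\<in>v ` C. \<Sum>i\<in>fibre w. a i *s v i) = lincomb v a"
    unfolding fibre_def by (subst sum.image_gen[symmetric]) (auto simp: C_def intro: lincomb_eq_sum[symmetric])
  finally have "(\<Sum>w\<in>v ` C. g w *s w) = 0" using a by (simp add: nonneg_relation_def)
  then show ?thesis unfolding open_convex_hull_def C_def[symmetric] using g1 gpos by force
qed

lemma open_convex_hull_imp_nonneg_relation:
  fixes v :: "'n::finite \<Rightarrow> rat ^ 'r"
  assumes "0 \<in> open_convex_hull (v ` A)"
  shows "\<exists>a. nonneg_relation v a \<and> {i. a i \<noteq> 0} \<subseteq> A"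
proof -
  obtain g where g0: "0 = (\<Sum>w\<in>v ` A. g w *s w)" and gpos: "\<forall>w\<in>v ` A. g w > 0"
    and g1: "(\<Sum>w\<in>v ` A. g w) = 1"
    using assms unfolding open_convex_hull_def by blast
  define rep where "rep w = inv_into A v w" for w
  define R where "R = rep ` v ` A"
  define a where "a i = (if i \<in> R then g (v i) else 0)" for i
  have rep: "rep w \<in> A" "v (rep w) = w" if "w \<in> v ` A" for w
    using that unfolding rep_def by (auto intro: inv_into_into f_inv_into_f)
  have inj: "inj_on rep (v ` A)" unfolding rep_def by (rule inj_on_inv_into) simp
  have "lincomb v a = (\<Sum>i\<in>R. g (v i) *s v i)"
    by (subst lincomb_eq_sum[of R]) (auto simp: a_def)
  also have "\<dots> = (\<Sum>w\<in>v ` A. g w *s w)"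
    unfolding R_def by (subst sum.reindex[OF inj]) (auto simp: rep)
  finally have "lincomb v a = 0" using g0 by simp
  moreover obtain w where "w \<in> v ` A" using g1 by fastforce
  then have "a (rep w) \<noteq> 0" using gpos rep by (auto simp: a_def R_def)
  moreover have "\<forall>i. 0 \<le> a i" using gpos rep by (auto simp: a_def R_def less_imp_le)
  moreover have "{i. a i \<noteq> 0} \<subseteq> A" using rep by (auto simp: a_def R_def split: if_splits)
  ultimately show ?thesis by (auto simp: nonneg_relation_def)
qed

definition pos_indep_imp_lin_indep :: "('n::finite \<Rightarrow> 'a::linordered_field ^ 'r) \<Rightarrow> bool" where
  "pos_indep_imp_lin_indep v \<longleftrightarrow> (\<forall>S. pos_indep_on v S \<longrightarrow> lin_indep_on v S)"

text \<open>Subtract from c the largest multiple of f that keeps the positive part of c nonnegative.\<close>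

lemma exists_sign_conformal_reduction:
  fixes c f :: "'n::finite \<Rightarrow> 'a::linordered_field"
  assumes f: "\<forall>i. 0 \<le> f i" and supp: "{i. f i \<noteq> 0} \<subseteq> {i. c i \<noteq> 0}"
    and k: "f k \<noteq> 0" "c k > 0"
  shows "\<exists>t>0. card {i. c i - t * f i \<noteq> 0} < card {i. c i \<noteq> 0} \<and>
           {i. c i - t * f i > 0} \<subseteq> {i. c i > 0} \<and> {i. c i - t * f i < 0} \<subseteq> {i. c i < 0}"
proof -
  define K where "K = {k. f k \<noteq> 0 \<and> c k > 0}"
  have K: "finite K" "K \<noteq> {}" using k by (auto simp: K_def)
  define t where "t = Min ((\<lambda>k. c k / f k) ` K)"
  have "t \<in> (\<lambda>k. c k / f k) ` K" unfolding t_def using K by (intro Min_in) auto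
  then obtain ks where ks: "ks \<in> K" "t = c ks / f ks" by blast
  have t_le: "t \<le> c i / f i" if "i \<in> K" for i using K that by (auto simp: t_def)
  have fpos: "f i > 0" if "f i \<noteq> 0" for i using f that by (simp add: order_le_neq_trans)
  have "t > 0" using ks fpos by (auto simp: K_def)
  have "{i. c i - t * f i \<noteq> 0} \<subseteq> {i. c i \<noteq> 0} - {ks}"
    using supp ks fpos by (auto simp: K_def)
  moreover have "ks \<in> {i. c i \<noteq> 0}" using ks by (auto simp: K_def)
  ultimately have "card {i. c i - t * f i \<noteq> 0} < card {i. c i \<noteq> 0}"
    by (meson card_Diff1_less card_mono finite order_le_less_trans)
  moreover have "{i. c i - t * f i > 0} \<subseteq> {i. c i > 0}"
  proof
    fix i assume "i \<in> {i. c i - t * f i > 0}"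
    moreover have "0 \<le> t * f i" using \<open>t > 0\<close> f by simp
    ultimately show "i \<in> {i. c i > 0}" by simp
  qed
  moreover have "c i < 0" if i: "c i - t * f i < 0" for i
  proof (rule ccontr)
    assume "\<not> c i < 0"
    then have "c i > 0" using i supp by (cases "c i = 0") force+
    moreover have "f i \<noteq> 0" using i \<open>c i > 0\<close> by auto
    ultimately have "t * f i \<le> c i" using t_le[of i] fpos[of i] by (simp add: K_def pos_le_divide_eq)
    then show False using i by simp
  qed
  ultimately show ?thesis using \<open>t > 0\<close> by blast
qed

lemma exists_conformal_nonneg_relation:
  fixes v :: "'n::finite \<Rightarrow> 'a::linordered_field ^ 'r"
  assumes P: "pos_indep_imp_lin_indep v"
  shows "lincomb v c = 0 \<Longrightarrow> (\<exists>i. c i \<noteq> 0) \<Longrightarrow>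
    \<exists>f. nonneg_relation v f \<and> ({i. f i \<noteq> 0} \<subseteq> {i. c i > 0} \<or> {i. f i \<noteq> 0} \<subseteq> {i. c i < 0})"
proof (induction "card {i. c i \<noteq> 0}" arbitrary: c rule: less_induct)
  case (less c)
  have "\<not> lin_indep_on v {i. c i \<noteq> 0}" using less.prems by (auto simp: lin_indep_on_def)
  then have "\<not> pos_indep_on v {i. c i \<noteq> 0}" using P unfolding pos_indep_imp_lin_indep_def by blast
  then obtain f where f: "nonneg_relation v f" and supp: "{i. f i \<noteq> 0} \<subseteq> {i. c i \<noteq> 0}"
    unfolding pos_indep_on_def by blast
  then have fnn: "\<forall>i. 0 \<le> f i" by (simp add: nonneg_relation_def)
  show ?case
  proof (cases "{i. f i \<noteq> 0} \<subseteq> {i. c i > 0} \<or> {i. f i \<noteq> 0} \<subseteq> {i. c i < 0}")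
    case True
    then show ?thesis using f by blast
  next
    case False
    then obtain k1 k2 where "f k1 \<noteq> 0" "\<not> c k1 > 0" "f k2 \<noteq> 0" "\<not> c k2 < 0" by blast
    moreover have "c k1 \<noteq> 0" "c k2 \<noteq> 0" using calculation supp by auto
    ultimately have k1: "f k1 \<noteq> 0" "c k1 < 0" and k2: "f k2 \<noteq> 0" "c k2 > 0" by auto
    obtain t where t: "t > 0" "card {i. c i - t * f i \<noteq> 0} < card {i. c i \<noteq> 0}"
      and pos: "{i. c i - t * f i > 0} \<subseteq> {i. c i > 0}"
      and neg: "{i. c i - t * f i < 0} \<subseteq> {i. c i < 0}"
      using exists_sign_conformal_reduction[OF fnn supp k2] by blast
    have "0 \<le> t * f k1" using t(1) fnn by simp
    then have "c k1 - t * f k1 \<noteq> 0" using k1 by linarith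
    moreover have "lincomb v (\<lambda>i. c i - t * f i) = 0"
      using less.prems f by (simp add: lincomb_diff lincomb_scale nonneg_relation_def)
    ultimately obtain g where "nonneg_relation v g" and
      "{i. g i \<noteq> 0} \<subseteq> {i. c i - t * f i > 0} \<or> {i. g i \<noteq> 0} \<subseteq> {i. c i - t * f i < 0}"
      using less.hyps[OF t(2)] by blast
    then show ?thesis using pos neg by blast
  qed
qed

lemma pos_circuits_disjoint:
  fixes v :: "'n::finite \<Rightarrow> 'a::linordered_field ^ 'r"
  assumes P: "pos_indep_imp_lin_indep v"
    and C: "pos_circuit v C" and D: "pos_circuit v D" and CD: "C \<noteq> D"
  shows "C \<inter> D = {}"
proof (rule ccontr)
  assume "C \<inter> D \<noteq> {}"
  then obtain i where i: "i \<in> C" "i \<in> D" by blast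
  obtain a where a: "nonneg_relation v a" "{i. a i \<noteq> 0} = C"
    using C by (auto simp: pos_circuit_def)
  obtain b where b: "nonneg_relation v b" "{i. b i \<noteq> 0} = D"
    using D by (auto simp: pos_circuit_def)
  have ann: "\<forall>k. 0 \<le> a k" and bnn: "\<forall>k. 0 \<le> b k" using a b by (auto simp: nonneg_relation_def)
  have ai: "a i > 0" and bi: "b i > 0"
    using i a b ann bnn by (auto simp: order_le_neq_trans)
  define c where "c = (\<lambda>k. b i * a k - a i * b k)"
  have "lincomb v c = 0"
    using a b by (simp add: c_def lincomb_diff lincomb_scale nonneg_relation_def)
  moreover have "\<exists>k. c k \<noteq> 0"
  proof (rule ccontr)
    assume "\<not> (\<exists>k. c k \<noteq> 0)"
    then have "b i * a k = a i * b k" for k by (auto simp: c_def)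
    then have "a k \<noteq> 0 \<longleftrightarrow> b k \<noteq> 0" for k using ai bi by (metis mult_eq_0_iff less_irrefl)
    then show False using a b CD by auto
  qed
  ultimately obtain f where f: "nonneg_relation v f"
    and conf: "{k. f k \<noteq> 0} \<subseteq> {k. c k > 0} \<or> {k. f k \<noteq> 0} \<subseteq> {k. c k < 0}"
    using exists_conformal_nonneg_relation[OF P] by blast
  have "{k. c k > 0} \<subseteq> C - {i}"
    using a ai bnn by (auto simp: c_def mult_nonneg_nonneg less_le_not_le)
  moreover have "{k. c k < 0} \<subseteq> D - {i}"
    using b bi ann by (auto simp: c_def mult_nonneg_nonneg less_le_not_le)
  ultimately have "{k. f k \<noteq> 0} \<subset> C \<or> {k. f k \<noteq> 0} \<subset> D" using conf i by blast
  then show False using C D f by (auto simp: pos_circuit_def)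
qed

lemma pos_circuit_remove_lin_indep:
  assumes P: "pos_indep_imp_lin_indep v" and C: "pos_circuit v C" and i: "i \<in> C"
  shows "lin_indep_on v (C - {i})"
proof -
  have "C - {i} \<subset> C" using i by blast
  then have "pos_indep_on v (C - {i})"
    using C by (auto simp: pos_indep_on_def pos_circuit_def)
  then show ?thesis using P by (simp add: pos_indep_imp_lin_indep_def)
qed

lemma pos_circuit_dim:
  assumes P: "pos_indep_imp_lin_indep v" and C: "pos_circuit v C"
  shows "vec.dim (vec.span (v ` C)) = card C - 1"
proof -
  obtain i where i: "i \<in> C" using pos_circuit_nonempty[OF C] by blast
  have "vec.dim (vec.span (v ` (C - {i}))) = card (C - {i})"
    using pos_circuit_remove_lin_indep[OF P C i] lin_indep_on_iff_dim by blast
  then show ?thesis using pos_circuit_span_remove[OF C i] i by simp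
qed

section \<open>Partitions into a free part and positive circuits\<close>

definition circuit_partition :: "('n::finite \<Rightarrow> rat ^ 'r) \<Rightarrow> nat \<Rightarrow> (nat \<Rightarrow> 'n set) \<Rightarrow> bool" where
  "circuit_partition v l I \<longleftrightarrow>
     (\<Union>j\<in>{0..l}. I j) = UNIV \<and>
     (\<forall>j\<in>{0..l}. \<forall>k\<in>{0..l}. j \<noteq> k \<longrightarrow> I j \<inter> I k = {}) \<and>
     (\<forall>j\<in>{1..l}. I j \<noteq> {}) \<and>
     is_direct_sum (vec.span (v ` UNIV)) {0..l} (\<lambda>j. vec.span (v ` I j)) \<and>
     vec.dim (vec.span (v ` I 0)) = card (I 0) \<and>
     (\<forall>j\<in>{1..l}. vec.dim (vec.span (v ` I j)) = card (I j) - 1) \<and>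
     (\<forall>j\<in>{1..l}. 0 \<in> open_convex_hull (v ` I j))"

lemma is_direct_sum_spansI:
  fixes v :: "'n::finite \<Rightarrow> rat ^ 'r"
  assumes cover: "(\<Union>j\<in>K. I j) = UNIV"
    and indep: "\<And>w j. \<forall>j\<in>K. w j \<in> vec.span (v ` I j) \<Longrightarrow> (\<Sum>j\<in>K. w j) = 0 \<Longrightarrow> j \<in> K \<Longrightarrow> w j = 0"
  shows "is_direct_sum (vec.span (v ` UNIV)) K (\<lambda>j. vec.span (v ` I j))"
  unfolding is_direct_sum_def
proof (intro conjI)
  show "\<forall>j\<in>K. vec.subspace (vec.span (v ` I j))" by (simp add: vec.subspace_span)
  show "\<forall>w. (\<forall>j\<in>K. w j \<in> vec.span (v ` I j)) \<longrightarrow> (\<Sum>j\<in>K. w j) = 0 \<longrightarrow> (\<forall>j\<in>K. w j = 0)"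
    using indep by blast
  have "v i \<in> (\<Union>j\<in>K. vec.span (v ` I j))" for i
  proof -
    obtain j where "j \<in> K" "i \<in> I j" using cover by blast
    then show ?thesis using vec.span_base[of "v i" "v ` I j"] by blast
  qed
  then have "vec.span (v ` UNIV) \<subseteq> vec.span (\<Union>j\<in>K. vec.span (v ` I j))"
    by (intro vec.span_mono) blast
  moreover have "vec.span (\<Union>j\<in>K. vec.span (v ` I j)) \<subseteq> vec.span (v ` UNIV)"
    by (intro vec.span_minimal vec.subspace_span UN_least vec.span_mono) auto
  ultimately show "vec.span (v ` UNIV) = vec.span (\<Union>j\<in>K. vec.span (v ` I j))" by blast
qed

lemma circuit_partitionD:
  assumes "circuit_partition v l I"
  shows "(\<Union>j\<in>{0..l}. I j) = UNIV"
    and "\<And>j k. j \<in> {0..l} \<Longrightarrow> k \<in> {0..l} \<Longrightarrow> j \<noteq> k \<Longrightarrow> I j \<inter> I k = {}"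
    and "\<And>w j. \<forall>j\<in>{0..l}. w j \<in> vec.span (v ` I j) \<Longrightarrow> (\<Sum>j\<in>{0..l}. w j) = 0 \<Longrightarrow>
      j \<in> {0..l} \<Longrightarrow> w j = 0"
    and "lin_indep_on v (I 0)"
    and "\<And>j. j \<in> {1..l} \<Longrightarrow> vec.dim (vec.span (v ` I j)) = card (I j) - 1"
    and "\<And>j. j \<in> {1..l} \<Longrightarrow> 0 \<in> open_convex_hull (v ` I j)"
proof -
  show "(\<Union>j\<in>{0..l}. I j) = UNIV" using assms by (simp add: circuit_partition_def)
  show "\<And>j k. j \<in> {0..l} \<Longrightarrow> k \<in> {0..l} \<Longrightarrow> j \<noteq> k \<Longrightarrow> I j \<inter> I k = {}"
    using assms by (simp add: circuit_partition_def)
  show "\<And>w j. \<forall>j\<in>{0..l}. w j \<in> vec.span (v ` I j) \<Longrightarrow> (\<Sum>j\<in>{0..l}. w j) = 0 \<Longrightarrow>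
      j \<in> {0..l} \<Longrightarrow> w j = 0"
    using assms by (simp add: circuit_partition_def is_direct_sum_def)
  show "lin_indep_on v (I 0)" using assms by (simp add: circuit_partition_def lin_indep_on_iff_dim)
  show "\<And>j. j \<in> {1..l} \<Longrightarrow> vec.dim (vec.span (v ` I j)) = card (I j) - 1"
    using assms by (simp add: circuit_partition_def)
  show "\<And>j. j \<in> {1..l} \<Longrightarrow> 0 \<in> open_convex_hull (v ` I j)"
    using assms by (simp add: circuit_partition_def)
qed

lemma circuit_partition_block_lin_indep:
  fixes v :: "'n::finite \<Rightarrow> rat ^ 'r"
  assumes part: "circuit_partition v l I" and S: "pos_indep_on v S" and j: "j \<in> {0..l}"
  shows "\<exists>B. lin_indep_on v B \<and> I j \<inter> S \<subseteq> B"
proof (cases "j = 0")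
  case True
  then show ?thesis using circuit_partitionD(4)[OF part] by blast
next
  case False
  then have j: "j \<in> {1..l}" using j by auto
  obtain a where a: "nonneg_relation v a" and supp: "{i. a i \<noteq> 0} \<subseteq> I j"
    using open_convex_hull_imp_nonneg_relation[OF circuit_partitionD(6)[OF part j]] by blast
  then obtain i0 where i0: "a i0 \<noteq> 0" "i0 \<notin> S" using S by (auto simp: pos_indep_on_def)
  have "vec.span (v ` I j) = vec.span (v ` (I j - {i0}))"
    using a supp i0 by (intro span_remove_redundant) (auto simp: nonneg_relation_def)
  moreover have "card (I j - {i0}) = card (I j) - 1" using supp i0 by auto
  ultimately have "lin_indep_on v (I j - {i0})"
    using circuit_partitionD(5)[OF part j] by (simp add: lin_indep_on_iff_dim)
  then show ?thesis using i0 by blast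
qed

lemma circuit_partition_imp_pos_indep_imp_lin_indep:
  fixes v :: "'n::finite \<Rightarrow> rat ^ 'r"
  assumes part: "circuit_partition v l I"
  shows "pos_indep_imp_lin_indep v"
  unfolding pos_indep_imp_lin_indep_def lin_indep_on_def
proof (intro allI impI)
  fix S c i assume S: "pos_indep_on v S" and c: "lincomb v c = 0" "{i. c i \<noteq> 0} \<subseteq> S"
  define cj where "cj j i = (if i \<in> I j then c i else 0)" for j i
  have c_sum: "c = (\<lambda>i. \<Sum>j\<in>{0..l}. cj j i)"
  proof
    fix i
    obtain j where j: "j \<in> {0..l}" "i \<in> I j" using circuit_partitionD(1)[OF part] by blast
    then have "cj k i = 0" if "k \<in> {0..l} - {j}" for k
      using circuit_partitionD(2)[OF part, of j k] that by (auto simp: cj_def)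
    then show "c i = (\<Sum>j\<in>{0..l}. cj j i)"
      using j by (simp add: sum.remove[of "{0..l}" j] sum.neutral cj_def)
  qed
  have "(\<Sum>j\<in>{0..l}. lincomb v (cj j)) = 0" using c(1) by (simp add: c_sum lincomb_sum)
  moreover have "\<forall>j\<in>{0..l}. lincomb v (cj j) \<in> vec.span (v ` I j)"
    by (auto simp: cj_def intro: lincomb_in_span)
  ultimately have blocks: "lincomb v (cj j) = 0" if "j \<in> {0..l}" for j
    using circuit_partitionD(3)[OF part, of "\<lambda>j. lincomb v (cj j)" j] that by blast
  have "cj j i = 0" if j: "j \<in> {0..l}" for j
  proof -
    obtain B where "lin_indep_on v B" "I j \<inter> S \<subseteq> B"
      using circuit_partition_block_lin_indep[OF part S j] by blast
    moreover have "{i. cj j i \<noteq> 0} \<subseteq> B" using calculation(2) c(2) by (auto simp: cj_def)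
    ultimately show ?thesis using blocks[OF j] lin_indep_onD by blast
  qed
  then show "c i = 0" by (subst c_sum) simp
qed

lemma pos_indep_onI_no_circuit:
  fixes v :: "'n::finite \<Rightarrow> 'a::linordered_field ^ 'r"
  assumes "\<And>C. pos_circuit v C \<Longrightarrow> \<not> C \<subseteq> X"
  shows "pos_indep_on v X"
  using exists_pos_circuit_subset assms unfolding pos_indep_on_def by blast

lemma exists_disjoint_enumeration:
  fixes M :: "'a set set"
  assumes fin: "finite M" and disj: "\<And>C D. C \<in> M \<Longrightarrow> D \<in> M \<Longrightarrow> C \<noteq> D \<Longrightarrow> C \<inter> D = {}"
  shows "\<exists>(l::nat) I. I ` {1..l} = M \<and> I 0 = - \<Union>M \<and> (\<Union>j\<in>{0..l}. I j) = UNIV \<and>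
    (\<forall>j\<in>{0..l}. \<forall>k\<in>{0..l}. j \<noteq> k \<longrightarrow> I j \<inter> I k = {})"
proof -
  obtain h where h: "bij_betw h {1..card M} M"
    using ex_bij_betw_nat_finite_1[OF fin] by blast
  define I where "I j = (if j = 0 then - \<Union>M else h j)" for j
  have "I ` {1..card M} = h ` {1..card M}" by (auto simp: I_def)
  then have image: "I ` {1..card M} = M" using h by (simp add: bij_betw_def)
  have I0_disj: "I 0 \<inter> I i = {}" if "i \<in> {1..card M}" for i
  proof -
    have "I i \<in> M" using image that by blast
    then show ?thesis using that by (auto simp: I_def)
  qed
  have I_disj: "I j \<inter> I k = {}" if jk: "j \<in> {0..card M}" "k \<in> {0..card M}" "j \<noteq> k" for j k
  proof (cases "j = 0 \<or> k = 0")
    case True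
    then show ?thesis using jk I0_disj[of j] I0_disj[of k] by auto
  next
    case False
    then have "j \<in> {1..card M}" "k \<in> {1..card M}" using jk by auto
    moreover from this have "h j \<noteq> h k"
      using inj_onD[OF bij_betw_imp_inj_on[OF h], of j k] jk(3) by blast
    moreover have "h j \<in> M" "h k \<in> M" using bij_betwE[OF h] calculation(1,2) by blast+
    ultimately show ?thesis using False disj by (simp add: I_def)
  qed
  have I_cover: "x \<in> (\<Union>j\<in>{0..card M}. I j)" for x
  proof (cases "x \<in> \<Union>M")
    case True
    then obtain C where "C \<in> M" "x \<in> C" by blast
    moreover from this obtain j where "j \<in> {1..card M}" "C = I j" using image by blast
    ultimately show ?thesis by auto
  qed (auto simp: I_def)
  show ?thesis
  proof (intro exI conjI)
    show "I 0 = - \<Union>M" by (simp add: I_def)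
    show "(\<Union>j\<in>{0..card M}. I j) = UNIV" using I_cover by blast
    show "\<forall>j\<in>{0..card M}. \<forall>k\<in>{0..card M}. j \<noteq> k \<longrightarrow> I j \<inter> I k = {}" using I_disj by blast
  qed (rule image)
qed

lemma pos_circuit_open_convex_hull:
  fixes v :: "'n::finite \<Rightarrow> rat ^ 'r"
  assumes "pos_circuit v C"
  shows "0 \<in> open_convex_hull (v ` C)"
  using assms nonneg_relation_imp_open_convex_hull unfolding pos_circuit_def by blast

lemma pos_circuits_direct_sum:
  fixes v :: "'n::finite \<Rightarrow> rat ^ 'r"
  assumes P: "pos_indep_imp_lin_indep v" and image: "I ` {1..l} = {C. pos_circuit v C}"
    and cover: "(\<Union>j\<in>{0..l}. I j) = UNIV"
    and disj: "\<forall>j\<in>{0..l}. \<forall>k\<in>{0..l}. j \<noteq> k \<longrightarrow> I j \<inter> I k = {}"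
  shows "is_direct_sum (vec.span (v ` UNIV)) {0..l} (\<lambda>j. vec.span (v ` I j))"
proof -
  have circ: "\<And>j. j \<in> {1..l} \<Longrightarrow> pos_circuit v (I j)" using image by blast
  then have "\<forall>j\<in>{1..l}. \<exists>i. i \<in> I j" using pos_circuit_nonempty by blast
  from bchoice[OF this] obtain r where r: "\<And>j. j \<in> {1..l} \<Longrightarrow> r j \<in> I j" by blast
  define J where "J j = (if j = 0 then I 0 else I j - {r j})" for j
  have J_sub: "J j \<subseteq> I j" for j by (auto simp: J_def)
  have span_J: "vec.span (v ` I j) = vec.span (v ` J j)" if "j \<in> {0..l}" for j
  proof (cases "j = 0")
    case False
    then have "j \<in> {1..l}" using that by auto
    then show ?thesis using False circ r by (simp add: J_def pos_circuit_span_remove)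
  qed (simp add: J_def)
  text \<open>Every circuit I j loses its index r j, so no circuit survives in the union of the J j:
    it is positively independent, hence free.\<close>
  have "pos_indep_on v (\<Union>j\<in>{0..l}. J j)"
  proof (rule pos_indep_onI_no_circuit)
    fix C assume "pos_circuit v C"
    then obtain j where j: "j \<in> {1..l}" "I j = C" using image by (metis imageE mem_Collect_eq)
    have "r j \<notin> J k" if "k \<in> {0..l}" for k
    proof (cases "k = j")
      case False
      then have "I j \<inter> I k = {}" using disj j(1) that by auto
      then show ?thesis using r[OF j(1)] J_sub[of k] by blast
    qed (use j(1) in \<open>simp add: J_def\<close>)
    then show "\<not> C \<subseteq> (\<Union>j\<in>{0..l}. J j)" using r[OF j(1)] j(2) by blast
  qed
  then have free: "lin_indep_on v (\<Union>j\<in>{0..l}. J j)"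
    using P by (simp add: pos_indep_imp_lin_indep_def)
  show ?thesis
  proof (rule is_direct_sum_spansI[OF cover])
    fix w j assume w: "\<forall>j\<in>{0..l}. w j \<in> vec.span (v ` I j)" "(\<Sum>j\<in>{0..l}. w j) = 0"
      and j: "j \<in> {0..l}"
    show "w j = 0"
    proof (rule lin_indep_on_disjoint_spans[OF free, of "{0..l}" J w j])
      show "\<And>j. j \<in> {0..l} \<Longrightarrow> w j \<in> vec.span (v ` J j)" using w span_J by simp
      show "\<And>j k. j \<in> {0..l} \<Longrightarrow> k \<in> {0..l} \<Longrightarrow> j \<noteq> k \<Longrightarrow> J j \<inter> J k = {}"
        using disj J_sub by blast
    qed (use w j in auto)
  qed
qed

lemma exists_circuit_partition:
  fixes v :: "'n::finite \<Rightarrow> rat ^ 'r"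
  assumes P: "pos_indep_imp_lin_indep v"
  shows "\<exists>l I. circuit_partition v l I"
proof -
  let ?M = "{C. pos_circuit v C}"
  have "\<And>C D. C \<in> ?M \<Longrightarrow> D \<in> ?M \<Longrightarrow> C \<noteq> D \<Longrightarrow> C \<inter> D = {}"
    using pos_circuits_disjoint[OF P] by blast
  then have "\<exists>(l::nat) I. I ` {1..l} = ?M \<and> I 0 = - \<Union>?M \<and> (\<Union>j\<in>{0..l}. I j) = UNIV \<and>
      (\<forall>j\<in>{0..l}. \<forall>k\<in>{0..l}. j \<noteq> k \<longrightarrow> I j \<inter> I k = {})"
    by (intro exists_disjoint_enumeration) simp_all
  then obtain l :: nat and I :: "nat \<Rightarrow> 'n set" where image: "I ` {1..l} = ?M"
    and I0: "I 0 = - \<Union>?M" and cover: "(\<Union>j\<in>{0..l}. I j) = UNIV"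
    and disj: "\<forall>j\<in>{0..l}. \<forall>k\<in>{0..l}. j \<noteq> k \<longrightarrow> I j \<inter> I k = {}"
    by (elim exE conjE)
  have "pos_indep_on v (I 0)"
  proof (rule pos_indep_onI_no_circuit)
    fix C assume "pos_circuit v C"
    then show "\<not> C \<subseteq> I 0" using pos_circuit_nonempty[of v C] I0 by blast
  qed
  then have "vec.dim (vec.span (v ` I 0)) = card (I 0)"
    using P by (simp add: pos_indep_imp_lin_indep_def lin_indep_on_iff_dim)
  moreover have "I j \<noteq> {} \<and> vec.dim (vec.span (v ` I j)) = card (I j) - 1 \<and>
      0 \<in> open_convex_hull (v ` I j)" if "j \<in> {1..l}" for j
  proof -
    have "pos_circuit v (I j)" using image that by blast
    then show ?thesis using pos_circuit_nonempty pos_circuit_dim[OF P] pos_circuit_open_convex_hull by blast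
  qed
  moreover have "is_direct_sum (vec.span (v ` UNIV)) {0..l} (\<lambda>j. vec.span (v ` I j))"
    using pos_circuits_direct_sum[OF P image cover disj] .
  ultimately have "circuit_partition v l I"
    using cover disj unfolding circuit_partition_def by simp
  then show ?thesis by blast
qed

theorem pos_indep_imp_lin_indep_iff_circuit_partition:
  fixes v :: "'n::finite \<Rightarrow> rat ^ 'r"
  shows "pos_indep_imp_lin_indep v \<longleftrightarrow> (\<exists>l I. circuit_partition v l I)"
  using exists_circuit_partition circuit_partition_imp_pos_indep_imp_lin_indep by blast

lemma power_int_sum:
  fixes x :: "'a::field"
  assumes "x \<noteq> 0"
  shows "x powi (\<Sum>i\<in>A. e i) = (\<Prod>i\<in>A. x powi e i)"
  by (induction A rule: infinite_finite_induct) (auto simp: power_int_add assms)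

lemma prod_power_int:
  fixes f :: "'i \<Rightarrow> 'a::field"
  shows "(\<Prod>i\<in>A. f i) powi m = (\<Prod>i\<in>A. f i powi m)"
  by (induction A rule: infinite_finite_induct) (auto simp: power_int_mult_distrib)

lemma one_in_torus: "1 \<in> torus"
  by (simp add: torus_def)

lemma torus_mult: "t \<in> torus \<Longrightarrow> t' \<in> torus \<Longrightarrow> t * t' \<in> torus"
  by (simp add: torus_def)

lemma char_eval_one: "char_eval s 1 = 1"
  by (simp add: char_eval_def)

lemma char_eval_mult: "char_eval s (t * t') = char_eval s t * char_eval s t'"
  by (simp add: char_eval_def power_int_mult_distrib prod.distrib)

lemma char_eval_zero: "char_eval 0 t = 1"
  by (simp add: char_eval_def)

lemma char_eval_add:
  "t \<in> torus \<Longrightarrow> char_eval (a + b) t = char_eval a t * char_eval b t"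
  by (simp add: char_eval_def torus_def power_int_add prod.distrib)

lemma char_eval_scale: "char_eval (m *s a) t = char_eval a t powi m"
  unfolding char_eval_def prod_power_int by (simp add: mult.commute flip: power_int_mult)

lemma char_eval_lincomb:
  assumes "t \<in> torus"
  shows "char_eval (\<Sum>i\<in>A. m i *s s i) t = (\<Prod>i\<in>A. char_eval (s i) t powi m i)"
  by (induction A rule: infinite_finite_induct)
    (simp_all add: char_eval_zero char_eval_add[OF assms] char_eval_scale)

lemma tact_mult: "tact s t (tact s t' x) = tact s (t * t') x"
  by (simp add: tact_def char_eval_mult vec_eq_iff mult.assoc)

lemma tact_one: "tact s 1 x = x"
  by (simp add: tact_def char_eval_one vec_eq_iff)

lemma in_orbitI: "t \<in> torus \<Longrightarrow> tact s t x \<in> orbit s x"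
  by (simp add: orbit_def)

lemma in_orbit_self: "x \<in> orbit s x"
  using in_orbitI[OF one_in_torus] by (simp add: tact_one)

lemma orbit_tact:
  fixes t :: "'a::field ^ 'r::finite"
  assumes t: "t \<in> torus"
  shows "orbit s (tact s t x) = orbit s x"
proof
  show "orbit s (tact s t x) \<subseteq> orbit s x"
  proof
    fix z assume "z \<in> orbit s (tact s t x)"
    then obtain t' where "t' \<in> torus" "z = tact s (t' * t) x" by (auto simp: orbit_def tact_mult)
    then show "z \<in> orbit s x" using in_orbitI torus_mult t by metis
  qed
  show "orbit s x \<subseteq> orbit s (tact s t x)"
  proof
    fix z assume "z \<in> orbit s x"
    then obtain t' where t': "t' \<in> torus" "z = tact s t' x" by (auto simp: orbit_def)
    define t'' where "t'' = (\<chi> k. t' $ k / t $ k)"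
    have "t'' \<in> torus" "t'' * t = t'" using t t' by (simp_all add: t''_def torus_def vec_eq_iff)
    then show "z \<in> orbit s (tact s t x)" using in_orbitI t' by (metis tact_mult)
  qed
qed

definition cochar :: "int ^ 'r \<Rightarrow> 'a::field \<Rightarrow> 'a ^ 'r" where
  "cochar l z = (\<chi> k. z powi (l $ k))"

lemma cochar_in_torus: "z \<noteq> 0 \<Longrightarrow> cochar l z \<in> torus"
  by (simp add: cochar_def torus_def)

lemma char_eval_cochar:
  fixes z :: "'a::field"
  assumes "z \<noteq> 0"
  shows "char_eval s (cochar l z) = z powi vdot l s"
  by (simp add: char_eval_def cochar_def vdot_def power_int_sum[OF assms]
      flip: power_int_mult)

lemma wt_eq_0_iff: "wt a = 0 \<longleftrightarrow> a = 0"
  by (simp add: wt_def vec_eq_iff)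

lemma wt_int_lincomb:
  "wt (\<Sum>i\<in>UNIV. m i *s s i) = lincomb (\<lambda>i. wt (s i)) (\<lambda>i. of_int (m i))"
  by (simp add: wt_def lincomb_def vec_eq_iff sum_component)

lemma vdot_wt: "vdot (wt l) (wt s) = of_int (vdot l s)"
  by (simp add: wt_def vdot_def)

lemma exists_common_denominator:
  fixes f :: "'k \<Rightarrow> rat"
  assumes "finite K"
  shows "\<exists>D::int. D > 0 \<and> (\<forall>k\<in>K. of_int D * f k \<in> \<int>)"
  using assms
proof (induction K rule: finite_induct)
  case empty
  then show ?case by (intro exI[of _ 1]) auto
next
  case (insert k K)
  then obtain D where D: "D > 0" "\<forall>k\<in>K. of_int D * f k \<in> \<int>" by blast
  obtain n d where nd: "quotient_of (f k) = (n, d)" by (cases "quotient_of (f k)")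
  have d: "d > 0" using quotient_of_denom_pos[OF nd] .
  have "of_int (D * d) * f k = of_int (D * n)"
    using d quotient_of_div[OF nd] by simp
  then have "of_int (D * d) * f k \<in> \<int>" by (simp only: Ints_of_int)
  moreover have "of_int (D * d) * f k' \<in> \<int>" if "k' \<in> K" for k'
  proof -
    have "of_int (D * d) * f k' = of_int d * (of_int D * f k')" by simp
    also have "\<dots> \<in> \<int>" using D(2) that by (auto intro!: Ints_mult[of "of_int d"])
    finally show ?thesis .
  qed
  ultimately have "\<forall>k'\<in>insert k K. of_int (D * d) * f k' \<in> \<int>" by blast
  then show ?case using D(1) d by (intro exI[of _ "D * d"]) simp
qed

lemma exists_int_multiple: "\<exists>D::int. D > 0 \<and> (\<exists>\<mu>. wt \<mu> = of_int D *s \<nu>)"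
proof -
  obtain D :: int where D: "D > 0" "\<forall>k\<in>UNIV. of_int D * \<nu> $ k \<in> \<int>"
    using exists_common_denominator[of UNIV "\<lambda>k. \<nu> $ k"] by auto
  then have "\<forall>k. \<exists>m. of_int D * \<nu> $ k = of_int m" by (metis Ints_cases UNIV_I)
  then obtain m where "\<And>k. of_int D * \<nu> $ k = of_int (m k)" by metis
  then have "wt (\<chi> k. m k) = of_int D *s \<nu>" by (simp add: wt_def vec_eq_iff)
  then show ?thesis using D(1) by blast
qed

lemma exists_int_relation:
  fixes s :: "'n::finite \<Rightarrow> int ^ 'r"
  assumes rel: "lincomb (\<lambda>i. wt (s i)) c = 0"
  shows "\<exists>m. (\<Sum>i\<in>UNIV. m i *s s i) = 0 \<and> (\<forall>i. m i = 0 \<longleftrightarrow> c i = 0) \<and> (\<forall>i. 0 \<le> c i \<longrightarrow> 0 \<le> m i)"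
proof -
  obtain D :: int where D: "D > 0" "\<forall>i\<in>UNIV. of_int D * c i \<in> \<int>"
    using exists_common_denominator[of UNIV c] by auto
  then have "\<forall>i. \<exists>m. of_int D * c i = of_int m" by (metis Ints_cases UNIV_I)
  then obtain m where m: "\<And>i. of_int (m i) = of_int D * c i" by metis
  have "wt (\<Sum>i\<in>UNIV. m i *s s i) = lincomb (\<lambda>i. wt (s i)) (\<lambda>i. of_int D * c i)"
    by (simp add: wt_int_lincomb m)
  also have "\<dots> = 0" by (simp add: lincomb_scale rel)
  finally have "(\<Sum>i\<in>UNIV. m i *s s i) = 0" by (simp add: wt_eq_0_iff)
  moreover have "m i = 0 \<longleftrightarrow> c i = 0" for i
    using m[of i] D(1) by (metis mult_eq_0_iff of_int_eq_0_iff less_irrefl)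
  moreover have "0 \<le> m i" if "0 \<le> c i" for i
    using m[of i] D(1) that by (metis mult_nonneg_nonneg of_int_0_le_iff less_imp_le)
  ultimately show ?thesis by blast
qed

section \<open>Invariant monomials\<close>

definition monomial :: "('n::finite \<Rightarrow> int) \<Rightarrow> 'a::field ^ 'n \<Rightarrow> 'a" where
  "monomial m y = (\<Prod>i\<in>UNIV. y $ i powi m i)"

lemma monomial_tact:
  assumes t: "t \<in> torus" and m: "(\<Sum>i\<in>UNIV. m i *s s i) = 0"
  shows "monomial m (tact s t y) = monomial m y"
proof -
  have "monomial m (tact s t y) = char_eval (\<Sum>i\<in>UNIV. m i *s s i) t * monomial m y"
    by (simp add: monomial_def tact_def char_eval_lincomb[OF t] power_int_mult_distrib prod.distrib)
  then show ?thesis by (simp add: m char_eval_zero)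
qed

lemma monomial_zero: "m i \<noteq> 0 \<Longrightarrow> monomial m 0 = 0"
  unfolding monomial_def by (rule prod_zero) auto

lemma monomial_nonzero: "(\<And>i. m i \<noteq> 0 \<Longrightarrow> y $ i \<noteq> 0) \<Longrightarrow> monomial m y \<noteq> 0"
  unfolding monomial_def by (auto simp: prod_zero_iff)

lemma polyfun_prod: "(\<And>i. i \<in> A \<Longrightarrow> p i \<in> polyfun) \<Longrightarrow> (\<lambda>v. \<Prod>i\<in>A. p i v) \<in> polyfun"
proof (induction A rule: infinite_finite_induct)
  case (infinite A)
  then show ?case using polyfun.pf_const[of 1] by simp
next
  case empty
  then show ?case using polyfun.pf_const[of 1] by simp
next
  case (insert a A)
  then show ?case using polyfun.pf_mult[of "p a" "\<lambda>v. \<Prod>i\<in>A. p i v"] by simp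
qed

lemma polyfun_power: "p \<in> polyfun \<Longrightarrow> (\<lambda>v. p v ^ n) \<in> polyfun"
  by (induction n) (auto intro: polyfun.pf_const[of 1, simplified] polyfun.pf_mult)

lemma monomial_polyfun:
  assumes "\<And>i. 0 \<le> m i"
  shows "monomial m \<in> polyfun"
proof -
  have "monomial m = (\<lambda>y. \<Prod>i\<in>UNIV. y $ i ^ nat (m i))"
    using assms by (simp add: monomial_def power_int_nonneg_exp fun_eq_iff)
  also have "\<dots> \<in> polyfun" by (intro polyfun_prod polyfun_power polyfun.pf_coord)
  finally show ?thesis .
qed

lemma polyfun_along_monomial_curve:
  fixes x :: "'a::field ^ 'n"
  assumes "p \<in> polyfun"
  shows "\<exists>q. \<forall>z. p (\<chi> i. z ^ e i * x $ i) = poly q z"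
  using assms
proof (induction rule: polyfun.induct)
  case (pf_const c)
  show ?case by (intro exI[of _ "[:c:]"]) simp
next
  case (pf_coord i)
  show ?case by (intro exI[of _ "monom (x $ i) (e i)"]) (simp add: poly_monom mult.commute)
next
  case (pf_add p q)
  then obtain a b where "\<forall>z. p (\<chi> i. z ^ e i * x $ i) = poly a z" "\<forall>z. q (\<chi> i. z ^ e i * x $ i) = poly b z"
    by blast
  then show ?case by (intro exI[of _ "a + b"]) simp
next
  case (pf_mult p q)
  then obtain a b where "\<forall>z. p (\<chi> i. z ^ e i * x $ i) = poly a z" "\<forall>z. q (\<chi> i. z ^ e i * x $ i) = poly b z"
    by blast
  then show ?case by (intro exI[of _ "a * b"]) simp
qed

section \<open>Nilpotent vectors\<close>

lemma nilpotent_vec_if_pos_vdot: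
  fixes x :: "'a::field_char_0 ^ 'n::finite" and s :: "'n \<Rightarrow> int ^ 'r::finite"
  assumes l: "\<And>i. x $ i \<noteq> 0 \<Longrightarrow> 0 < vdot l (s i)"
  shows "nilpotent_vec s x"
  unfolding nilpotent_vec_def zariski_closure_def
proof (intro CollectI ballI impI)
  fix p assume p: "p \<in> polyfun" "\<forall>z\<in>orbit s x. p z = 0"
  define e where "e i = nat (vdot l (s i))" for i
  obtain q where q: "\<And>z. p (\<chi> i. z ^ e i * x $ i) = poly q z"
    using polyfun_along_monomial_curve[OF p(1)] by blast
  have curve: "tact s (cochar l z) x = (\<chi> i. z ^ e i * x $ i)" if z: "z \<noteq> 0" for z
  proof -
    have "char_eval (s i) (cochar l z) * x $ i = z ^ e i * x $ i" for i
      using l[of i] by (cases "x $ i = 0")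
        (simp_all add: char_eval_cochar[OF z] e_def power_int_nonneg_exp less_imp_le)
    then show ?thesis by (simp add: tact_def vec_eq_iff)
  qed
  have "poly q z = 0" if "z \<noteq> 0" for z
    using p(2) in_orbitI[OF cochar_in_torus[OF that]] curve[OF that] q by metis
  then have "q = 0"
    using poly_roots_finite[of q] infinite_UNIV_char_0 finite_subset[of UNIV "insert 0 {z. poly q z = 0}"]
    by auto
  moreover have "(\<chi> i. (0::'a) ^ e i * x $ i) = 0"
    using l by (auto simp: vec_eq_iff e_def)
  ultimately show "p 0 = 0" using q[of 0] by simp
qed

lemma nilpotent_vec_imp_pos_indep_support:
  fixes s :: "'n::finite \<Rightarrow> int ^ 'r::finite" and x :: "'a::field ^ 'n"
  assumes nil: "nilpotent_vec s x"
  shows "pos_indep_on (\<lambda>i. wt (s i)) {i. x $ i \<noteq> 0}"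
  unfolding pos_indep_on_def
proof
  assume "\<exists>c. nonneg_relation (\<lambda>i. wt (s i)) c \<and> {i. c i \<noteq> 0} \<subseteq> {i. x $ i \<noteq> 0}"
  then obtain c where c: "nonneg_relation (\<lambda>i. wt (s i)) c" and supp: "{i. c i \<noteq> 0} \<subseteq> {i. x $ i \<noteq> 0}"
    by blast
  obtain m where rel: "(\<Sum>i\<in>UNIV. m i *s s i) = 0"
    and m0: "\<And>i. m i = 0 \<longleftrightarrow> c i = 0" and mnn: "\<And>i. 0 \<le> m i"
    using exists_int_relation[of s c] c by (auto simp: nonneg_relation_def)
  obtain i1 where "m i1 \<noteq> 0" using c m0 by (auto simp: nonneg_relation_def)
  then have "monomial m (0 :: 'a ^ 'n) = 0" by (rule monomial_zero)
  moreover have "monomial m x \<noteq> 0" using supp m0 by (intro monomial_nonzero) auto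
  moreover have "(\<lambda>y. monomial m y + - monomial m x) \<in> polyfun"
    by (intro polyfun.pf_add monomial_polyfun polyfun.pf_const mnn)
  moreover have "\<forall>y\<in>orbit s x. monomial m y + - monomial m x = 0"
    by (auto simp: orbit_def monomial_tact[OF _ rel])
  ultimately show False using nil by (auto simp: nilpotent_vec_def zariski_closure_def)
qed

lemma exists_dual_functional:
  fixes v :: "'n::finite \<Rightarrow> 'a::field ^ 'r::finite"
  assumes F: "lin_indep_on v S" and j: "j \<in> S"
  shows "\<exists>\<nu>. \<forall>i\<in>S. vdot \<nu> (v i) = (if i = j then 1 else 0)"
proof -
  have inj: "inj_on v S" and indep: "vec.independent (v ` S)"
    using F by (auto simp: lin_indep_on_iff_inj_independent)
  define B where "B = vec.extend_basis (v ` S)"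
  have B: "v ` S \<subseteq> B" "vec.independent B" "vec.span B = UNIV"
    using vec.extend_basis_superset[OF indep] vec.independent_extend_basis[OF indep]
      vec.span_extend_basis[OF indep] by (auto simp: B_def)
  define R where "R y = vec.representation B y (v j)" for y
  define \<nu> where "\<nu> = (\<chi> k. R (axis k 1))"
  have "R y = vdot \<nu> y" for y
  proof -
    have "R y = R (\<Sum>k\<in>UNIV. y $ k *s axis k 1)" by (simp only: basis_expansion)
    also have "\<dots> = (\<Sum>k\<in>UNIV. y $ k * R (axis k 1))"
      using B(2,3) by (simp add: R_def vec.representation_sum vec.representation_scale)
    finally show ?thesis by (simp add: vdot_def \<nu>_def mult.commute)
  qed
  moreover have "R (v i) = (if i = j then 1 else 0)" if "i \<in> S" for i
    using B(1,2) inj that j by (auto simp: R_def vec.representation_basis inj_on_eq_iff)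
  ultimately show ?thesis by metis
qed

lemma exists_dual_cocharacter:
  fixes s :: "'n::finite \<Rightarrow> int ^ 'r::finite"
  assumes "lin_indep_on (\<lambda>i. wt (s i)) S" "j \<in> S"
  shows "\<exists>\<mu> d. d > 0 \<and> (\<forall>i\<in>S. vdot \<mu> (s i) = (if i = j then d else 0))"
proof -
  obtain \<nu> where \<nu>: "\<forall>i\<in>S. vdot \<nu> (wt (s i)) = (if i = j then 1 else 0)"
    using exists_dual_functional[OF assms] by blast
  obtain D :: int and \<mu> where D: "D > 0" "wt \<mu> = of_int D *s \<nu>"
    using exists_int_multiple by blast
  have "of_int (vdot \<mu> (s i)) = (of_int (if i = j then D else 0) :: rat)" if "i \<in> S" for i
    using \<nu> that by (simp flip: vdot_wt add: D(2) vdot_scale_left)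
  then show ?thesis using D(1) by (intro exI[of _ \<mu>] exI[of _ D]) (simp del: of_int_eq_0_iff)
qed

lemma char_eval_prod: "char_eval s (\<Prod>j\<in>A. t j) = (\<Prod>j\<in>A. char_eval s (t j))"
  by (induction A rule: infinite_finite_induct) (simp_all add: char_eval_mult char_eval_one)

lemma tact_transitive_on_support:
  fixes s :: "'n::finite \<Rightarrow> int ^ 'r::finite" and x y :: "'a::alg_closed_field ^ 'n"
  assumes F: "lin_indep_on (\<lambda>i. wt (s i)) S"
    and sx: "{i. x $ i \<noteq> 0} = S" and sy: "{i. y $ i \<noteq> 0} = S"
  shows "\<exists>t\<in>torus. y = tact s t x"
proof -
  obtain \<mu> d where d: "\<And>j. j \<in> S \<Longrightarrow> d j > 0"
    and dual: "\<And>i j. j \<in> S \<Longrightarrow> i \<in> S \<Longrightarrow> vdot (\<mu> j) (s i) = (if i = j then d j else 0)"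
    using exists_dual_cocharacter[OF F] by metis
  have "\<forall>j\<in>S. \<exists>z. z ^ nat (d j) = y $ j / x $ j"
    using d by (auto intro: nth_root_exists)
  then obtain z where z: "\<And>j. j \<in> S \<Longrightarrow> z j ^ nat (d j) = y $ j / x $ j" by metis
  have z0: "z j \<noteq> 0" if "j \<in> S" for j
    using z[OF that] d[OF that] sx sy that by (auto simp: zero_power)
  define t where "t = (\<Prod>j\<in>S. cochar (\<mu> j) (z j))"
  have "t \<in> torus"
    unfolding t_def using z0 by (induction S rule: infinite_finite_induct)
      (auto simp: one_in_torus torus_mult cochar_in_torus)
  moreover have "char_eval (s i) t * x $ i = y $ i" if i: "i \<in> S" for i
  proof -
    have "char_eval (s i) t = (\<Prod>j\<in>S. z j powi (if i = j then d j else 0))"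
      by (simp add: t_def char_eval_prod char_eval_cochar z0 dual i)
    also have "\<dots> = z i powi d i" using i by (simp add: if_distrib prod.delta cong: if_cong)
    also have "\<dots> = y $ i / x $ i" using z[OF i] d[OF i] by (simp add: power_int_nonneg_exp)
    finally show ?thesis using i sx by auto
  qed
  moreover have "x $ i = 0 \<and> y $ i = 0" if "i \<notin> S" for i using that sx sy by auto
  ultimately have "y $ i = tact s t x $ i" for i by (cases "i \<in> S") (auto simp: tact_def)
  then have "y = tact s t x" by (simp add: vec_eq_iff)
  with \<open>t \<in> torus\<close> show ?thesis by blast
qed

section \<open>Visibility\<close>

lemma visible_if_pos_indep_imp_lin_indep:
  fixes s :: "'n::finite \<Rightarrow> int ^ 'r::finite"
  assumes P: "pos_indep_imp_lin_indep (\<lambda>i. wt (s i))"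
  shows "visible TYPE('a::alg_closed_field) s"
proof -
  define ind where "ind A = (\<chi> i. if i \<in> A then 1 else (0 :: 'a))" for A :: "'n set"
  have "{orbit s x |x :: 'a ^ 'n. nilpotent_vec s x} \<subseteq> range (\<lambda>A. orbit s (ind A))"
  proof safe
    fix x :: "'a ^ 'n" assume "nilpotent_vec s x"
    then have "lin_indep_on (\<lambda>i. wt (s i)) {i. x $ i \<noteq> 0}"
      using P nilpotent_vec_imp_pos_indep_support by (auto simp: pos_indep_imp_lin_indep_def)
    moreover have "{i. ind {i. x $ i \<noteq> 0} $ i \<noteq> 0} = {i. x $ i \<noteq> 0}" by (simp add: ind_def)
    ultimately obtain t where "t \<in> torus" "x = tact s t (ind {i. x $ i \<noteq> 0})"
      using tact_transitive_on_support by blast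
    then have "orbit s x = orbit s (ind {i. x $ i \<noteq> 0})" using orbit_tact by metis
    then show "orbit s x \<in> range (\<lambda>A. orbit s (ind A))" by blast
  qed
  then show ?thesis unfolding visible_def by (rule finite_subset) simp
qed

lemma visible_imp_finite_invariant_values:
  fixes f :: "'a::field ^ 'n::finite \<Rightarrow> 'b"
  assumes vis: "visible TYPE('a) s" and inv: "\<And>t y. t \<in> torus \<Longrightarrow> f (tact s t y) = f y"
  shows "finite (f ` {x. nilpotent_vec s x})"
proof -
  let ?orbits = "{orbit s x |x :: 'a ^ 'n. nilpotent_vec s x}"
  have "f ` orbit s x \<subseteq> {f x}" for x by (auto simp: orbit_def inv)
  then have "finite (f ` B)" if "B \<in> ?orbits" for B using that by (auto intro: finite_subset)
  moreover have "finite ?orbits" using vis by (simp add: visible_def)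
  ultimately have "finite (\<Union>B\<in>?orbits. f ` B)" by (intro finite_UN_I)
  moreover have "f ` {x. nilpotent_vec s x} \<subseteq> (\<Union>B\<in>?orbits. f ` B)" using in_orbit_self by blast
  ultimately show ?thesis by (rule finite_subset[rotated])
qed

lemma power_int_surj:
  fixes w :: "'a::alg_closed_field"
  assumes m: "m \<noteq> 0" and w: "w \<noteq> 0"
  shows "\<exists>u. u powi m = w"
proof (cases "m > 0")
  case True
  then obtain u where "u ^ nat m = w" using nth_root_exists[of "nat m" w] by auto
  then show ?thesis using True by (auto simp: power_int_nonneg_exp)
next
  case False
  then obtain u where u: "u ^ nat (- m) = inverse w" using m nth_root_exists[of "nat (- m)"] by auto
  have "u powi m = inverse (u powi (- m))" by (simp add: power_int_minus)
  also have "\<dots> = w" using False u by (simp add: power_int_nonneg_exp)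
  finally show ?thesis by blast
qed

lemma exists_pos_cocharacter:
  fixes s :: "'n::finite \<Rightarrow> int ^ 'r::finite"
  assumes "pos_indep_on (\<lambda>i. wt (s i)) S"
  shows "\<exists>l. \<forall>i\<in>S. 0 < vdot l (s i)"
proof -
  obtain l0 where l0: "\<forall>i\<in>S. 0 < vdot l0 (wt (s i))"
    using pos_indep_on_imp_pos_functional[OF assms] by blast
  obtain D :: int and l where "D > 0" "wt l = of_int D *s l0" using exists_int_multiple by blast
  then have "(of_int (vdot l (s i)) :: rat) > 0" if "i \<in> S" for i
    using l0 that by (simp flip: vdot_wt add: vdot_scale_left)
  then show ?thesis by auto
qed

text \<open>If some S carries no nonnegative relation but a relation m, the points with support S are
  nilpotent, and the invariant monomial of m takes infinitely many values on them.\<close>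

lemma pos_indep_imp_lin_indep_if_visible:
  fixes s :: "'n::finite \<Rightarrow> int ^ 'r::finite"
  assumes vis: "visible TYPE('a::{alg_closed_field, field_char_0}) s"
  shows "pos_indep_imp_lin_indep (\<lambda>i. wt (s i))"
  unfolding pos_indep_imp_lin_indep_def
proof (intro allI impI)
  fix S assume S: "pos_indep_on (\<lambda>i. wt (s i)) S"
  show "lin_indep_on (\<lambda>i. wt (s i)) S"
  proof (rule ccontr)
    assume "\<not> lin_indep_on (\<lambda>i. wt (s i)) S"
    then obtain c i1 where c: "lincomb (\<lambda>i. wt (s i)) c = 0" "{i. c i \<noteq> 0} \<subseteq> S" "c i1 \<noteq> 0"
      by (auto simp: lin_indep_on_def)
    obtain m where rel: "(\<Sum>i\<in>UNIV. m i *s s i) = 0" and m0: "\<And>i. m i = 0 \<longleftrightarrow> c i = 0"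
      using exists_int_relation[OF c(1)] by blast
    obtain l where l: "\<forall>i\<in>S. 0 < vdot l (s i)" using exists_pos_cocharacter[OF S] by blast
    define x where "x u = (\<chi> i. if i = i1 then u else if i \<in> S then 1 else (0 :: 'a))" for u
    have mono: "monomial m (x u) = u powi m i1" for u
    proof -
      have "(x u $ i) powi m i = 1" if "i \<in> UNIV - {i1}" for i
        using that c(2) m0[of i] by (cases "i \<in> S") (auto simp: x_def)
      then have "(\<Prod>i\<in>UNIV - {i1}. (x u $ i) powi m i) = 1" by (rule prod.neutral[rule_format])
      then show ?thesis unfolding monomial_def by (subst prod.remove[of UNIV i1]) (simp_all add: x_def)
    qed
    have nil: "nilpotent_vec s (x u)" for u
      using c(2,3) l by (intro nilpotent_vec_if_pos_vdot) (auto simp: x_def split: if_splits)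
    have "UNIV - {0 :: 'a} \<subseteq> monomial m ` {x. nilpotent_vec s x}"
    proof
      fix w :: 'a assume "w \<in> UNIV - {0}"
      then obtain u where "u powi m i1 = w" using power_int_surj[of "m i1" w] m0 c(3) by auto
      then show "w \<in> monomial m ` {x. nilpotent_vec s x}"
        using nil[of u] mono[of u] by (intro image_eqI[of _ _ "x u"]) auto
    qed
    moreover have "finite (monomial m ` {x :: 'a ^ 'n. nilpotent_vec s x})"
      using vis monomial_tact[OF _ rel] by (rule visible_imp_finite_invariant_values)
    ultimately have "finite (UNIV - {0 :: 'a})" by (rule finite_subset)
    then show False using infinite_UNIV_char_0[where 'a = 'a] by simp
  qed
qed

theorem visible_iff_pos_indep_imp_lin_indep:
  fixes s :: "'n::finite \<Rightarrow> int ^ 'r::finite"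
  shows "visible TYPE('a::{alg_closed_field, field_char_0}) s \<longleftrightarrow> pos_indep_imp_lin_indep (\<lambda>i. wt (s i))"
  using visible_if_pos_indep_imp_lin_indep pos_indep_imp_lin_indep_if_visible by blast

theorem proposition3p5:
  fixes s :: "'n::finite \<Rightarrow> int ^ 'r::finite"
  shows "visible TYPE('a::{alg_closed_field, field_char_0}) s \<longleftrightarrow>
    (\<exists>(l::nat) (I :: nat \<Rightarrow> 'n set).
       (\<Union>j\<in>{0..l}. I j) = UNIV \<and>
       (\<forall>j\<in>{0..l}. \<forall>k\<in>{0..l}. j \<noteq> k \<longrightarrow> I j \<inter> I k = {}) \<and>
       (\<forall>j\<in>{1..l}. I j \<noteq> {}) \<and>
       is_direct_sum (vec.span (wt ` s ` UNIV)) {0..l} (\<lambda>j. vec.span (wt ` s ` I j)) \<and>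
       vec.dim (vec.span (wt ` s ` I 0)) = card (I 0) \<and>
       (\<forall>j\<in>{1..l}. vec.dim (vec.span (wt ` s ` I j)) = card (I j) - 1) \<and>
       (\<forall>j\<in>{1..l}. 0 \<in> open_convex_hull (wt ` s ` I j)))"
proof -
  have "wt ` s ` A = (\<lambda>i. wt (s i)) ` A" for A by (simp add: image_image)
  then show ?thesis
    using visible_iff_pos_indep_imp_lin_indep[of s]
      pos_indep_imp_lin_indep_iff_circuit_partition[of "\<lambda>i. wt (s i)"]
    unfolding circuit_partition_def by simp
qed

end
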